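(* Let $k\ge 2$ and $0<\lambda\le\frac{1}{3k}$, and consider the common-chunk-protocol Markov process with $L_1(\mathbf{x})=\sum_{i=1}^k \bar S_i$. Then there exists $\epsilon>0$ such that $\Delta L_1(\mathbf{x})<-\epsilon$ for every state $\mathbf{x}$ with $S>3k^3$.
   Context: Model: Fix an integer $k\ge 2$ (number of chunks of a file) and $\lambda>0$. There is always exactly one seed holding all $k$ chunks. Non-seed peers arrive according to a Poisson process of rate $\lambda$, each arriving with no chunks; each non-seed peer holds a subset (its profile) of $\{1,\dots,k\}$ and leaves the system immediately once it holds all $k$ chunks. The state $\mathbf{x}$ of the continuous-time Markov process is the number of non-seed peers with each profile. $S$ denotes the total number of peers present, including the seed. Each non-seed peer has an independent rate-1 Poisson clock; at each tick it draws a sample of peers independently and uniformly at random with replacement from the current $S$ peers (seed and itself included) and may instantaneously download at most one chunk that it lacks and that is held by some sampled peer (such a chunk is a "match"). Counting draws with multiplicity, a chunk is "rare" in a sample of 3 draws if exactly one of the 3 draws holds it. Common chunk protocol: (i) a peer with no chunks draws 3 peers and downloads a chunk chosen uniformly among the rare matches, if there is any, otherwise nothing; (ii) a peer holding at least 1 and at most $k-2$ chunks draws 1 peer and downloads a uniformly chosen match, if any, otherwise nothing; (iii) a peer holding exactly $k-1$ chunks draws 3 peers and downloads its missing chunk only if that chunk is held by some draw and every chunk it holds is held by at least 2 of the 3 draws; otherwise nothing. Notation: $S_i$ ($1\le i\le k$) is the number of peers, including the seed, holding chunk $i$; $\bar S_i=S-S_i$. For a function $f$ on the state space, with $q(\mathbf{x},\mathbf{x}')$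 the transition rates of the Markov process, the drift is $\Delta f(\mathbf{x})=\sum_{\mathbf{x}'\neq\mathbf{x}} q(\mathbf{x},\mathbf{x}')\,(f(\mathbf{x}')-f(\mathbf{x}))$. *)

theory Defs
  imports "HOL-Analysis.Analysis"
begin

text \<open>A profile is a set of chunks. A state assigns to each
profile the number of non-seed peers holding exactly that profile; only proper
subsets of {1..k} can be occupied (a peer holding all chunks leaves).\<close>

definition chunks :: "nat \<Rightarrow> nat set" where
  "chunks k = {1..k}"

definition valid_state :: "nat \<Rightarrow> (nat set \<Rightarrow> nat) \<Rightarrow> bool" where
  "valid_state k x \<longleftrightarrow> (\<forall>D. \<not> D \<subset> chunks k \<longrightarrow> x D = 0)"

text \<open>Total number of peers, including the seed.\<close>
definition S_tot :: "nat \<Rightarrow> (nat set \<Rightarrow> nat) \<Rightarrow> nat" where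
  "S_tot k x = 1 + (\<Sum>D\<in>{D. D \<subset> chunks k}. x D)"

text \<open>Number of peers (including the seed) holding chunk i.\<close>
definition S_chunk :: "nat \<Rightarrow> (nat set \<Rightarrow> nat) \<Rightarrow> nat \<Rightarrow> nat" where
  "S_chunk k x i = 1 + (\<Sum>D\<in>{D. D \<subset> chunks k \<and> i \<in> D}. x D)"

definition L1 :: "nat \<Rightarrow> (nat set \<Rightarrow> nat) \<Rightarrow> real" where
  "L1 k x = (\<Sum>i\<in>chunks k. real (S_tot k x) - real (S_chunk k x i))"

text \<open>Probability that a single uniform draw (with replacement, among all S peers
including the seed and the drawing peer itself) returns a peer with profile D.\<close>
definition draw_w :: "nat \<Rightarrow> (nat set \<Rightarrow> nat) \<Rightarrow> nat set \<Rightarrow> real" where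
  "draw_w k x D = (real (x D) + (if D = chunks k then 1 else 0)) / real (S_tot k x)"

definition ind :: "bool \<Rightarrow> nat" where
  "ind b = (if b then 1 else 0)"

definition cnt3 :: "nat set \<Rightarrow> nat set \<Rightarrow> nat set \<Rightarrow> nat \<Rightarrow> nat" where
  "cnt3 D1 D2 D3 i = ind (i \<in> D1) + ind (i \<in> D2) + ind (i \<in> D3)"

text \<open>Probability, per clock tick, that a peer with profile C downloads chunk j
under the common chunk protocol.\<close>
definition dl_prob :: "nat \<Rightarrow> (nat set \<Rightarrow> nat) \<Rightarrow> nat set \<Rightarrow> nat \<Rightarrow> real" where
  "dl_prob k x C j =
    (if card C = 0 then
       (\<Sum>D1\<in>Pow (chunks k). \<Sum>D2\<in>Pow (chunks k). \<Sum>D3\<in>Pow (chunks k).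
          draw_w k x D1 * draw_w k x D2 * draw_w k x D3 *
          (let R = {i \<in> chunks k - C. cnt3 D1 D2 D3 i = 1}
           in if j \<in> R then 1 / real (card R) else 0))
     else if card C = k - 1 then
       (\<Sum>D1\<in>Pow (chunks k). \<Sum>D2\<in>Pow (chunks k). \<Sum>D3\<in>Pow (chunks k).
          draw_w k x D1 * draw_w k x D2 * draw_w k x D3 *
          (if j \<in> D1 \<union> D2 \<union> D3 \<and> (\<forall>i\<in>C. cnt3 D1 D2 D3 i \<ge> 2) then 1 else 0))
     else
       (\<Sum>D\<in>Pow (chunks k). draw_w k x D *
          (if j \<in> D - C then 1 / real (card (D - C)) else 0)))"

definition arrive :: "(nat set \<Rightarrow> nat) \<Rightarrow> (nat set \<Rightarrow> nat)" where
  "arrive x = x({} := x {} + 1)"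

definition move :: "nat \<Rightarrow> (nat set \<Rightarrow> nat) \<Rightarrow> nat set \<Rightarrow> nat \<Rightarrow> (nat set \<Rightarrow> nat)" where
  "move k x C j = (let x1 = x(C := x C - 1) in
     if insert j C = chunks k then x1 else x1(insert j C := x1 (insert j C) + 1))"

definition rate :: "nat \<Rightarrow> real \<Rightarrow> (nat set \<Rightarrow> nat) \<Rightarrow> (nat set \<Rightarrow> nat) \<Rightarrow> real" where
  "rate k lam x x' =
     (if x' = arrive x then lam else 0) +
     (\<Sum>C\<in>{C. C \<subset> chunks k}. \<Sum>j\<in>chunks k - C.
        real (x C) * dl_prob k x C j * (if x' = move k x C j then 1 else 0))"

definition drift :: "nat \<Rightarrow> real \<Rightarrow> ((nat set \<Rightarrow> nat) \<Rightarrow> real) \<Rightarrow> (nat set \<Rightarrow> nat) \<Rightarrow> real" where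
  "drift k lam f x = (\<Sum>\<^sub>\<infinity>x'\<in>UNIV - {x}. rate k lam x x' * (f x' - f x))"

end

theory Submission
  imports Defs
begin

text \<open>
  \<open>L\<^sub>1 = \<Sum>\<^sub>i (S - S\<^sub>i)\<close> is the total number of chunks missing at the
  non-seed peers.  An arrival increases it by \<open>k\<close> and every download decreases it by one,
  so its drift is \<open>\<lambda>k\<close> minus the total download rate, and \<open>\<lambda>k \<le> 1/3\<close>.  It therefore
  suffices to show that the total download rate is at least \<open>3/8\<close> whenever \<open>S > 3k\<^sup>3\<close>.

  For this the peers are split into empty peers (\<open>A\<close> of them), the one-club (peers
  missing exactly one chunk, \<open>F\<close> in total, \<open>M\<close> in a largest profile class) and the
  middle peers (\<open>B\<close>).  Lower bounds on the per-peer download probabilities, obtained from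
  a generic estimate for three independent draws, give
    \<open>D S\<^sup>3 \<ge> 3A\<^sup>3(S - A)\<close>,  \<open>D S \<ge> B(1 + F)\<close>,  \<open>D S\<^sup>3 \<ge> 3M\<^sup>3(1 + F - M)\<close>
  for the total download rate \<open>D\<close>, and an elementary case analysis on which class is
  large turns these into \<open>D \<ge> 3/8\<close>.
\<close>

lemma finite_chunks [simp]: "finite (chunks k)"
  by (simp add: chunks_def)

lemma card_chunks [simp]: "card (chunks k) = k"
  by (simp add: chunks_def)

lemma finite_proper_profiles [simp]: "finite {D. D \<subset> chunks k \<and> P D}"
  by (rule finite_subset[of _ "Pow (chunks k)"]) auto

lemma finite_proper_profiles' [simp]: "finite {D. D \<subset> chunks k}"
  using finite_proper_profiles[of k "\<lambda>_. True"] by simp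

definition missing :: "nat \<Rightarrow> (nat set \<Rightarrow> nat) \<Rightarrow> real" where
  "missing k x = (\<Sum>D\<in>Pow (chunks k). real (x D) * real (card (chunks k - D)))"

text \<open>\<open>S - S\<^sub>i\<close> is the number of non-seed peers lacking chunk \<open>i\<close>; exchanging the
order of summation shows that \<open>L\<^sub>1\<close> counts the missing chunks peer by peer.\<close>

lemma L1_eq_missing: "L1 k x = missing k x"
proof -
  let ?P = "{D. D \<subset> chunks k}"
  have lacking: "real (S_tot k x) - real (S_chunk k x i) =
      (\<Sum>D\<in>?P. real (x D) * (if i \<in> D then 0 else 1))" for i
  proof -
    have "(\<Sum>D\<in>?P. real (x D)) =
        (\<Sum>D\<in>?P. if i \<in> D then real (x D) else 0) + (\<Sum>D\<in>?P. real (x D) * (if i \<in> D then 0 else 1))"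
      by (simp add: sum.distrib[symmetric]; rule sum.cong; simp)
    then show ?thesis
      by (simp add: S_tot_def S_chunk_def sum.inter_filter[symmetric])
  qed
  have "L1 k x = (\<Sum>D\<in>?P. real (x D) * (\<Sum>i\<in>chunks k. if i \<in> D then 0 else 1))"
    by (simp add: L1_def lacking sum.swap[of _ "chunks k"] sum_distrib_left)
  also have "\<dots> = (\<Sum>D\<in>?P. real (x D) * real (card (chunks k - D)))"
    by (intro sum.cong refl arg_cong2[where f="(*)"])
       (simp add: sum.If_cases Diff_eq[symmetric] Int_absorb1)
  also have "\<dots> = missing k x"
    unfolding missing_def by (rule sum.mono_neutral_left) auto
  finally show ?thesis .
qed

lemma missing_update:
  assumes "C \<subseteq> chunks k"
  shows "missing k (x(C := v)) =
    missing k x + (real v - real (x C)) * real (card (chunks k - C))"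
proof -
  have C: "C \<in> Pow (chunks k)" using assms by simp
  have "missing k (x(C := v)) - real v * real (card (chunks k - C))
      = missing k x - real (x C) * real (card (chunks k - C))"
    unfolding missing_def sum.remove[OF finite_Pow_iff[THEN iffD2, OF finite_chunks] C]
    by (simp add: sum.cong[of _ _ "\<lambda>D. real ((x(C:=v)) D) * _" "\<lambda>D. real (x D) * _"])
  then show ?thesis by (simp add: algebra_simps)
qed

lemma missing_arrive: "missing k (arrive x) = missing k x + real k"
  unfolding arrive_def by (subst missing_update) auto

lemma missing_move:
  assumes "C \<subset> chunks k" "j \<in> chunks k - C" "x C \<ge> 1"
  shows "missing k (move k x C j) = missing k x - 1"
proof -
  let ?x1 = "x(C := x C - 1)"
  have C: "card (chunks k - C) \<ge> 1"
    using assms(2) by (metis One_nat_def Suc_leI card_gt_0_iff empty_iff finite_Diff finite_chunks)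
  have x1: "missing k ?x1 = missing k x - real (card (chunks k - C))"
    using missing_update[of C k x "x C - 1"] assms by (simp add: of_nat_diff algebra_simps)
  show ?thesis
  proof (cases "insert j C = chunks k")
    case True
    then have "chunks k - C = {j}" using assms(2) by auto
    then show ?thesis using x1 True by (simp add: move_def)
  next
    case False
    have move: "move k x C j = ?x1(insert j C := ?x1 (insert j C) + 1)"
      using False by (simp add: move_def)
    have "card (chunks k - insert j C) = card (chunks k - C) - 1"
      using assms(2) by (metis Diff_insert card_Diff_singleton Diff_iff finite_Diff finite_chunks)
    moreover have "insert j C \<subseteq> chunks k" using assms by auto
    ultimately have "missing k (move k x C j) = missing k ?x1 + (real (card (chunks k - C)) - 1)"
      unfolding move using missing_update[of "insert j C" k ?x1] C by (simp add: of_nat_diff)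
    then show ?thesis using x1 by simp
  qed
qed

definition dl_rate :: "nat \<Rightarrow> (nat set \<Rightarrow> nat) \<Rightarrow> nat set \<Rightarrow> real" where
  "dl_rate k x C = (\<Sum>j\<in>chunks k - C. dl_prob k x C j)"

definition total_dl_rate :: "nat \<Rightarrow> (nat set \<Rightarrow> nat) \<Rightarrow> real" where
  "total_dl_rate k x = (\<Sum>C\<in>{C. C \<subset> chunks k}. real (x C) * dl_rate k x C)"

lemma has_sum_finite_sum:
  fixes f :: "'i \<Rightarrow> 'a \<Rightarrow> real"
  assumes "finite I" "\<And>i. i \<in> I \<Longrightarrow> (f i has_sum s i) A"
  shows "((\<lambda>y. \<Sum>i\<in>I. f i y) has_sum (\<Sum>i\<in>I. s i)) A"
  using assms by (induction I rule: finite_induct) (auto intro: has_sum_add)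

lemma has_sum_point_mass:
  fixes g :: "'a \<Rightarrow> real"
  assumes "g x = 0"
  shows "((\<lambda>y. (if y = a then c else 0) * g y) has_sum (c * g a)) (UNIV - {x})"
  by (rule has_sum_finite_neutralI[where B="{a} - {x}"]) (use assms in \<open>auto simp: insert_Diff_if\<close>)

text \<open>Since \<open>L\<^sub>1\<close> counts missing chunks, its drift is the arrival rate of missing chunks
minus the total download rate.\<close>

lemma drift_L1: "drift k lam (L1 k) x = lam * real k - total_dl_rate k x"
proof -
  let ?P = "{C. C \<subset> chunks k}"
  define g where "g y = L1 k y - L1 k x" for y
  have g0: "g x = 0" by (simp add: g_def)
  have split: "rate k lam x y * g y = (if y = arrive x then lam else 0) * g y +
     (\<Sum>C\<in>?P. \<Sum>j\<in>chunks k - C. (if y = move k x C j then real (x C) * dl_prob k x C j else 0) * g y)"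
    for y
    unfolding rate_def distrib_right sum_distrib_right
    by (intro arg_cong2[where f="(+)"] refl sum.cong) auto
  have "((\<lambda>y. rate k lam x y * g y) has_sum (lam * g (arrive x) +
      (\<Sum>C\<in>?P. \<Sum>j\<in>chunks k - C. real (x C) * dl_prob k x C j * g (move k x C j)))) (UNIV - {x})"
    unfolding split
    by (intro has_sum_add has_sum_finite_sum has_sum_point_mass[where g=g, OF g0]) auto
  then have "drift k lam (L1 k) x = lam * g (arrive x) +
      (\<Sum>C\<in>?P. \<Sum>j\<in>chunks k - C. real (x C) * dl_prob k x C j * g (move k x C j))"
    unfolding drift_def g_def by (rule infsumI)
  moreover have "g (arrive x) = real k"
    by (simp add: g_def L1_eq_missing missing_arrive)
  moreover have "real (x C) * dl_prob k x C j * g (move k x C j) = - (real (x C) * dl_prob k x C j)"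
    if "C \<in> ?P" "j \<in> chunks k - C" for C j
    using missing_move[of C k j x] that
    by (cases "x C = 0") (simp_all add: g_def L1_eq_missing)
  ultimately show ?thesis
    by (simp add: total_dl_rate_def dl_rate_def sum_distrib_left sum_negf)
qed

text \<open>A single draw returns a peer of proper profile \<open>D\<close> with probability \<open>x D / S\<close>
and the seed (the only holder of all chunks in a valid state) with probability \<open>1/S\<close>.\<close>

lemma draw_w_nonneg: "0 \<le> draw_w k x D"
  by (simp add: draw_w_def)

lemma S_tot_pos: "0 < real (S_tot k x)"
  by (simp add: S_tot_def add_pos_nonneg sum_nonneg)

lemma draw_w_proper: "D \<noteq> chunks k \<Longrightarrow> draw_w k x D = real (x D) / real (S_tot k x)"
  by (simp add: draw_w_def)

lemma draw_w_seed: "valid_state k x \<Longrightarrow> draw_w k x (chunks k) = 1 / real (S_tot k x)"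
  by (simp add: valid_state_def draw_w_def)

lemma sum_draw_w:
  assumes "valid_state k x"
  shows "(\<Sum>D\<in>Pow (chunks k). draw_w k x D) = 1"
proof -
  have "(\<Sum>D\<in>Pow (chunks k). real (x D)) = (\<Sum>D\<in>{D. D \<subset> chunks k}. real (x D))"
    by (rule sum.mono_neutral_right) (use assms in \<open>auto simp: valid_state_def\<close>)
  then have "(\<Sum>D\<in>Pow (chunks k). real (x D) + (if D = chunks k then 1 else 0)) = real (S_tot k x)"
    by (simp add: sum.distrib S_tot_def)
  then show ?thesis
    using S_tot_pos[of k x] by (simp add: draw_w_def sum_divide_distrib[symmetric])
qed

lemma draw_w_seed_or:
  assumes "valid_state k x" "T \<subseteq> {C. C \<subset> chunks k}"
  shows "(\<Sum>D\<in>insert (chunks k) T. draw_w k x D) = (1 + (\<Sum>C\<in>T. real (x C))) / real (S_tot k x)"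
proof -
  have "chunks k \<notin> T" "finite T"
    using assms(2) by (auto intro: finite_subset[OF _ finite_proper_profiles'])
  moreover have "(\<Sum>D\<in>T. draw_w k x D) = (\<Sum>C\<in>T. real (x C) / real (S_tot k x))"
    using \<open>chunks k \<notin> T\<close> by (intro sum.cong refl draw_w_proper) auto
  ultimately show ?thesis
    using draw_w_seed[OF assms(1)] by (simp add: add_divide_distrib sum_divide_distrib)
qed

lemma sum_uniform_choice:
  assumes "finite J" "R \<subseteq> J"
  shows "(\<Sum>j\<in>J. if j \<in> R then 1 / real (card R) else 0) = (if R = {} then 0 else 1)"
proof -
  have "(\<Sum>j\<in>J. if j \<in> R then 1 / real (card R) else 0) = (\<Sum>j\<in>R. 1 / real (card R))"
    using assms by (intro sum.mono_neutral_cong_right) auto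
  then show ?thesis
    using assms finite_subset[OF assms(2)] by auto
qed

text \<open>Three independent draws from a distribution \<open>w\<close>: the outcome "one draw in \<open>G\<close>, the
other two in the disjoint set \<open>H\<close>" has probability \<open>3 w(G) w(H)\<^sup>2\<close>, hence this is a lower
bound for the probability of any event \<open>Q\<close> containing all these outcomes.\<close>

lemma three_draws_one_odd:
  fixes w :: "'a \<Rightarrow> real"
  assumes "finite P" "G \<subseteq> P" "H \<subseteq> P" "G \<inter> H = {}" "\<And>D. D \<in> P \<Longrightarrow> 0 \<le> w D"
    and Q: "\<And>a b c. \<lbrakk>a \<in> G; b \<in> H; c \<in> H\<rbrakk> \<Longrightarrow> Q a b c \<and> Q b a c \<and> Q b c a"
  shows "3 * sum w G * (sum w H)^2 \<le>
    (\<Sum>D1\<in>P. \<Sum>D2\<in>P. \<Sum>D3\<in>P. w D1 * w D2 * w D3 * (if Q D1 D2 D3 then 1 else 0))"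
proof -
  define f where "f D = (if D \<in> G then w D else 0)" for D
  define g where "g D = (if D \<in> H then w D else 0)" for D
  have sums: "sum f P = sum w G" "sum g P = sum w H"
    using assms(1-3) by (simp_all add: f_def g_def sum.If_cases Int_absorb1)
  have product: "(\<Sum>D1\<in>P. \<Sum>D2\<in>P. \<Sum>D3\<in>P. a D1 * b D2 * c D3) = sum a P * sum b P * sum c P"
    for a b c :: "'a \<Rightarrow> real"
    by (simp add: sum_distrib_left[symmetric] sum_distrib_right[symmetric])
  have "3 * sum f P * (sum g P)^2 =
      (\<Sum>D1\<in>P. \<Sum>D2\<in>P. \<Sum>D3\<in>P. f D1 * g D2 * g D3 + g D1 * f D2 * g D3 + g D1 * g D2 * f D3)"
    by (simp only: sum.distrib product) (simp add: power2_eq_square)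
  also have "\<dots> \<le> (\<Sum>D1\<in>P. \<Sum>D2\<in>P. \<Sum>D3\<in>P. w D1 * w D2 * w D3 * (if Q D1 D2 D3 then 1 else 0))"
    using assms(2-5) Q by (intro sum_mono) (auto simp: f_def g_def)
  finally show ?thesis by (simp only: sums)
qed

lemma dl_rate_nonneg: "0 \<le> dl_rate k x C"
  unfolding dl_rate_def dl_prob_def Let_def
  by (auto intro!: sum_nonneg mult_nonneg_nonneg draw_w_nonneg)

lemma dl_rate_no_chunks:
  "dl_rate k x {} = (\<Sum>D1\<in>Pow (chunks k). \<Sum>D2\<in>Pow (chunks k). \<Sum>D3\<in>Pow (chunks k).
     draw_w k x D1 * draw_w k x D2 * draw_w k x D3 *
     (if {i \<in> chunks k. cnt3 D1 D2 D3 i = 1} \<noteq> {} then 1 else 0))"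
proof -
  let ?P = "Pow (chunks k)"
  have "dl_rate k x {} = (\<Sum>D1\<in>?P. \<Sum>D2\<in>?P. \<Sum>D3\<in>?P. draw_w k x D1 * draw_w k x D2 * draw_w k x D3 *
     (\<Sum>j\<in>chunks k. let R = {i \<in> chunks k. cnt3 D1 D2 D3 i = 1} in if j \<in> R then 1 / real (card R) else 0))"
    unfolding dl_rate_def dl_prob_def
    by (simp add: sum_distrib_left sum.swap[of _ "chunks k"])
  also have "\<dots> = (\<Sum>D1\<in>?P. \<Sum>D2\<in>?P. \<Sum>D3\<in>?P. draw_w k x D1 * draw_w k x D2 * draw_w k x D3 *
     (if {i \<in> chunks k. cnt3 D1 D2 D3 i = 1} \<noteq> {} then 1 else 0))"
    unfolding Let_def by (intro sum.cong refl) (subst sum_uniform_choice, auto)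
  finally show ?thesis .
qed

lemma dl_rate_middle_eq:
  assumes "card C \<noteq> 0" "card C \<noteq> k - 1"
  shows "dl_rate k x C = (\<Sum>D\<in>Pow (chunks k). if D - C = {} then 0 else draw_w k x D)"
proof -
  have "dl_rate k x C = (\<Sum>D\<in>Pow (chunks k). draw_w k x D *
      (\<Sum>j\<in>chunks k - C. if j \<in> D - C then 1 / real (card (D - C)) else 0))"
    unfolding dl_rate_def dl_prob_def using assms
    by (simp add: sum_distrib_left sum.swap[of _ "chunks k - C"])
  also have "\<dots> = (\<Sum>D\<in>Pow (chunks k). if D - C = {} then 0 else draw_w k x D)"
    by (intro sum.cong refl) (subst sum_uniform_choice, auto)
  finally show ?thesis .
qed

lemma dl_rate_one_club_eq:
  assumes "k \<ge> 2" "j0 \<in> chunks k"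
  shows "dl_rate k x (chunks k - {j0}) =
    (\<Sum>D1\<in>Pow (chunks k). \<Sum>D2\<in>Pow (chunks k). \<Sum>D3\<in>Pow (chunks k).
       draw_w k x D1 * draw_w k x D2 * draw_w k x D3 *
       (if j0 \<in> D1 \<union> D2 \<union> D3 \<and> (\<forall>i\<in>chunks k - {j0}. cnt3 D1 D2 D3 i \<ge> 2) then 1 else 0))"
proof -
  have "chunks k - (chunks k - {j0}) = {j0}" "card (chunks k - {j0}) = k - 1"
    using assms(2) by auto
  then show ?thesis
    using assms(1) by (simp add: dl_rate_def dl_prob_def)
qed

text \<open>A peer with no chunks downloads whenever exactly
one of its three draws holds any chunk; a peer missing only \<open>j0\<close> downloads whenever two
draws are fellow peers with the same profile and the third holds \<open>j0\<close>; a peer in between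
downloads whenever its single draw holds a chunk it lacks.\<close>

lemma dl_rate_empty_ge:
  assumes "valid_state k x"
  shows "3 * (1 - draw_w k x {}) * (draw_w k x {})^2 \<le> dl_rate k x {}"
proof -
  let ?P = "Pow (chunks k)" and ?w = "draw_w k x"
  have rest: "sum ?w (?P - {{}}) = 1 - ?w {}"
    using sum_draw_w[OF assms] sum.remove[of ?P "{}" ?w] by simp
  have "3 * sum ?w (?P - {{}}) * (sum ?w {{}})^2 \<le> dl_rate k x {}"
    unfolding dl_rate_no_chunks
  proof (rule three_draws_one_odd)
    fix a b c :: "nat set" assume "a \<in> ?P - {{}}" "b \<in> {{}}" "c \<in> {{}}"
    then obtain i where "i \<in> a" "i \<in> chunks k" "b = {}" "c = {}" by auto
    then show "{i \<in> chunks k. cnt3 a b c i = 1} \<noteq> {} \<and> {i \<in> chunks k. cnt3 b a c i = 1} \<noteq> {}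
        \<and> {i \<in> chunks k. cnt3 b c a i = 1} \<noteq> {}"
      by (auto simp: cnt3_def ind_def)
  qed (auto simp: draw_w_nonneg)
  moreover have "sum ?w {{}} = ?w {}" by simp
  ultimately show ?thesis
    unfolding rest by simp
qed

lemma dl_rate_one_club_ge:
  assumes "k \<ge> 2" "j0 \<in> chunks k" "G \<subseteq> {D \<in> Pow (chunks k). j0 \<in> D}"
  shows "3 * sum (draw_w k x) G * (draw_w k x (chunks k - {j0}))^2 \<le> dl_rate k x (chunks k - {j0})"
proof -
  have "3 * sum (draw_w k x) G * (sum (draw_w k x) {chunks k - {j0}})^2 \<le> dl_rate k x (chunks k - {j0})"
    unfolding dl_rate_one_club_eq[OF assms(1,2)]
    by (rule three_draws_one_odd) (use assms(3) in \<open>auto simp: draw_w_nonneg cnt3_def ind_def\<close>)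
  then show ?thesis by simp
qed

lemma dl_rate_middle_ge:
  assumes "card C \<noteq> 0" "card C \<noteq> k - 1" "G \<subseteq> Pow (chunks k)" "\<And>D. D \<in> G \<Longrightarrow> \<not> D \<subseteq> C"
  shows "sum (draw_w k x) G \<le> dl_rate k x C"
proof -
  have "sum (draw_w k x) G = (\<Sum>D\<in>G. if D - C = {} then 0 else draw_w k x D)"
    using assms(4) by (intro sum.cong) auto
  also have "\<dots> \<le> (\<Sum>D\<in>Pow (chunks k). if D - C = {} then 0 else draw_w k x D)"
    using assms(3) by (intro sum_mono2) (auto simp: draw_w_nonneg)
  finally show ?thesis
    unfolding dl_rate_middle_eq[OF assms(1,2)] .
qed

definition one_club :: "nat \<Rightarrow> nat set set" where
  "one_club k = {C. C \<subset> chunks k \<and> card C = k - 1}"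

definition middle :: "nat \<Rightarrow> nat set set" where
  "middle k = {C. C \<subset> chunks k \<and> card C \<noteq> 0 \<and> card C \<noteq> k - 1}"

lemma one_club_iff:
  assumes "k \<ge> 2"
  shows "C \<in> one_club k \<longleftrightarrow> (\<exists>j\<in>chunks k. C = chunks k - {j})"
proof
  assume C: "C \<in> one_club k"
  then have "C \<subseteq> chunks k" "card (chunks k - C) = 1"
    using assms by (auto simp: one_club_def card_Diff_subset finite_subset)
  then show "\<exists>j\<in>chunks k. C = chunks k - {j}"
    by (auto simp: card_Suc_eq)
qed (auto simp: one_club_def)

lemma finite_one_club [simp]: "finite (one_club k)"
  by (simp add: one_club_def)

lemma card_one_club:
  assumes "k \<ge> 2"
  shows "card (one_club k) \<le> k"
proof -
  have "one_club k \<subseteq> (\<lambda>j. chunks k - {j}) ` chunks k"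
    using one_club_iff[OF assms] by blast
  then show ?thesis
    by (metis card_chunks card_image_le card_mono finite_chunks finite_imageI order_trans)
qed

lemma one_club_nonempty: "k \<ge> 2 \<Longrightarrow> one_club k \<noteq> {}"
  using one_club_iff[of k "chunks k - {1}"] by (auto simp: chunks_def)

lemma S_tot_split:
  assumes "k \<ge> 2"
  shows "real (S_tot k x) =
    1 + real (x {}) + (\<Sum>C\<in>middle k. real (x C)) + (\<Sum>C\<in>one_club k. real (x C))"
proof -
  have "{} \<subset> chunks k"
    using assms by (auto simp: chunks_def)
  then have "{C. C \<subset> chunks k} = insert {} (middle k \<union> one_club k)"
    using finite_subset[OF _ finite_chunks[of k]] by (auto simp: middle_def one_club_def card_gt_0_iff)
  moreover have "{} \<notin> middle k \<union> one_club k" "middle k \<inter> one_club k = {}"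
    using assms by (auto simp: middle_def one_club_def)
  moreover have "finite (middle k)"
    by (simp add: middle_def)
  ultimately show ?thesis
    by (simp add: S_tot_def sum.union_disjoint)
qed

lemma total_dl_rate_ge_class:
  assumes "T \<subseteq> {C. C \<subset> chunks k}" "\<And>C. C \<in> T \<Longrightarrow> r \<le> dl_rate k x C"
  shows "(\<Sum>C\<in>T. real (x C)) * r \<le> total_dl_rate k x"
proof -
  have "(\<Sum>C\<in>T. real (x C)) * r \<le> (\<Sum>C\<in>T. real (x C) * dl_rate k x C)"
    unfolding sum_distrib_right by (rule sum_mono) (use assms(2) in \<open>auto intro: mult_left_mono\<close>)
  also have "\<dots> \<le> total_dl_rate k x"
    unfolding total_dl_rate_def
    by (rule sum_mono2) (use assms(1) in \<open>auto intro: mult_nonneg_nonneg dl_rate_nonneg\<close>)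
  finally show ?thesis .
qed

lemma total_dl_rate_ge_single:
  assumes "C \<subset> chunks k" "r \<le> dl_rate k x C"
  shows "real (x C) * r \<le> total_dl_rate k x"
  using total_dl_rate_ge_class[of "{C}" k r x] assms by simp

lemma scaled_cubic_bound:
  fixes a b S D :: real
  assumes "0 < S" "a * (3 * (b / S) * (a / S)^2) \<le> D"
  shows "3 * a^3 * b \<le> D * S^3"
proof -
  have "a * (3 * (b / S) * (a / S)^2) * S^3 = 3 * a^3 * b"
    using assms(1) by (simp add: power_divide power3_eq_cube power2_eq_square)
  moreover have "a * (3 * (b / S) * (a / S)^2) * S^3 \<le> D * S^3"
    using assms by (intro mult_right_mono) auto
  ultimately show ?thesis by simp
qed

lemma total_dl_rate_empty:
  assumes "valid_state k x" "k \<ge> 2"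
  shows "3 * real (x {})^3 * (real (S_tot k x) - real (x {})) \<le> total_dl_rate k x * real (S_tot k x)^3"
proof (rule scaled_cubic_bound[OF S_tot_pos])
  let ?S = "real (S_tot k x)" and ?A = "real (x {})"
  have "{} \<noteq> chunks k" using assms(2) by (auto simp: chunks_def)
  then have "draw_w k x {} = ?A / ?S" by (rule draw_w_proper)
  then have "3 * ((?S - ?A) / ?S) * (?A / ?S)^2 \<le> dl_rate k x {}"
    using dl_rate_empty_ge[OF assms(1)] S_tot_pos[of k x] by (simp add: diff_divide_distrib)
  then show "?A * (3 * ((?S - ?A) / ?S) * (?A / ?S)^2) \<le> total_dl_rate k x"
    using \<open>{} \<noteq> chunks k\<close> by (intro total_dl_rate_ge_single) auto
qed

lemma total_dl_rate_middle:
  assumes "valid_state k x" "k \<ge> 2"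
  shows "(\<Sum>C\<in>middle k. real (x C)) * (1 + (\<Sum>C\<in>one_club k. real (x C)))
    \<le> total_dl_rate k x * real (S_tot k x)"
proof -
  let ?S = "real (S_tot k x)" and ?F = "\<Sum>C\<in>one_club k. real (x C)"
  have "(1 + ?F) / ?S \<le> dl_rate k x C" if "C \<in> middle k" for C
  proof -
    have C: "C \<subset> chunks k" "card C \<noteq> k - 1"
      using that by (simp_all add: middle_def)
    then have "card C < k - 1"
      using psubset_card_mono[OF finite_chunks C(1)] by simp
    moreover have "k - 1 \<le> card D" if "D \<in> insert (chunks k) (one_club k)" for D
      using that by (auto simp: one_club_def)
    moreover have "finite C"
      using C(1) finite_subset[OF _ finite_chunks] by blast
    ultimately have "\<not> D \<subseteq> C" if "D \<in> insert (chunks k) (one_club k)" for D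
      using that card_mono[of C D] by fastforce
    then have "sum (draw_w k x) (insert (chunks k) (one_club k)) \<le> dl_rate k x C"
      using \<open>C \<in> middle k\<close> by (intro dl_rate_middle_ge) (auto simp: middle_def one_club_def)
    moreover have "sum (draw_w k x) (insert (chunks k) (one_club k)) = (1 + ?F) / ?S"
      by (rule draw_w_seed_or[OF assms(1)]) (auto simp: one_club_def)
    ultimately show ?thesis by simp
  qed
  then have "(\<Sum>C\<in>middle k. real (x C)) * ((1 + ?F) / ?S) \<le> total_dl_rate k x"
    by (intro total_dl_rate_ge_class) (auto simp: middle_def)
  then show ?thesis
    using S_tot_pos[of k x] by (simp add: pos_divide_le_eq)
qed

lemma total_dl_rate_one_club:
  assumes "valid_state k x" "k \<ge> 2" "C0 \<in> one_club k"
  shows "3 * real (x C0)^3 * (1 + (\<Sum>C\<in>one_club k. real (x C)) - real (x C0))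
    \<le> total_dl_rate k x * real (S_tot k x)^3"
proof -
  let ?S = "real (S_tot k x)" and ?F = "\<Sum>C\<in>one_club k. real (x C)" and ?M = "real (x C0)"
  obtain j0 where j0: "j0 \<in> chunks k" "C0 = chunks k - {j0}"
    using one_club_iff[OF assms(2)] assms(3) by blast
  let ?G = "insert (chunks k) (one_club k - {C0})"
  have "?G \<subseteq> {D \<in> Pow (chunks k). j0 \<in> D}"
    using j0 one_club_iff[OF assms(2)] by auto
  then have rate: "3 * sum (draw_w k x) ?G * (draw_w k x C0)^2 \<le> dl_rate k x C0"
    using dl_rate_one_club_ge[OF assms(2) j0(1)] j0(2) by simp
  have "sum (draw_w k x) ?G = (1 + (\<Sum>C\<in>one_club k - {C0}. real (x C))) / ?S"
    by (rule draw_w_seed_or[OF assms(1)]) (auto simp: one_club_def)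
  moreover have "?F = ?M + (\<Sum>C\<in>one_club k - {C0}. real (x C))"
    by (rule sum.remove[OF finite_one_club assms(3)])
  ultimately have "sum (draw_w k x) ?G = (1 + ?F - ?M) / ?S"
    by simp
  moreover have "draw_w k x C0 = ?M / ?S"
    using j0 by (intro draw_w_proper) auto
  ultimately have "?M * (3 * ((1 + ?F - ?M) / ?S) * (?M / ?S)^2) \<le> total_dl_rate k x"
    using rate assms(3) by (intro total_dl_rate_ge_single) (auto simp: one_club_def)
  then show ?thesis
    by (rule scaled_cubic_bound[OF S_tot_pos])
qed

lemma rate_bound_empty_heavy:
  fixes A S D :: real
  assumes "0 < S" "0 \<le> A" "1 \<le> S - A" "S\<^sup>2 \<le> 4 * A^3" "3 * A^3 * (S - A) \<le> D * S^3"
  shows "3 / 8 \<le> D"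
proof -
  have "3 / 8 * S^3 \<le> 3 * A^3 * (S - A)"
  proof (cases "S \<le> 2 * A")
    case True
    then have "S^3 \<le> (2 * A)^3" using assms(1) by (intro power_mono) auto
    then have "3 * (S^3 / 8) * 1 \<le> 3 * A^3 * (S - A)"
      using assms(2,3) by (intro mult_mono) auto
    then show ?thesis by simp
  next
    case False
    then have "3 / 8 * S^3 = 3 * (S\<^sup>2 / 4) * (S / 2)"
      by (simp add: power2_eq_square power3_eq_cube)
    also have "\<dots> \<le> 3 * A^3 * (S - A)"
      using False assms(1,2,4) by (intro mult_mono) auto
    finally show ?thesis .
  qed
  then have "3 / 8 * S^3 \<le> D * S^3" using assms(5) by linarith
  then show ?thesis by (rule mult_right_le_imp_le) (use assms(1) in simp)
qed

lemma few_empty: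
  fixes A S :: real
  assumes "16 \<le> S" "0 \<le> A" "4 * A^3 < S\<^sup>2"
  shows "4 * A < S"
proof (rule ccontr)
  assume "\<not> 4 * A < S"
  then have "S^3 \<le> (4 * A)^3" using assms(1) by (intro power_mono) auto
  then have "S * S\<^sup>2 \<le> 16 * (4 * A^3)" by (simp add: power3_eq_cube power2_eq_square)
  also have "\<dots> < 16 * S\<^sup>2" using assms(3) by simp
  finally show False using assms(1) mult_right_mono[OF assms(1), of "S\<^sup>2"] by simp
qed

text \<open>If there is at least one middle peer, each of the \<open>B\<close> middle peers downloads
at rate at least \<open>(1 + F)/S\<close>, and \<open>B(1 + F) \<ge> B + F\<close>.\<close>

lemma rate_bound_middle_heavy:
  fixes B F S D :: real
  assumes "0 \<le> F" "1 \<le> B" "B * (1 + F) \<le> D * S" "3 / 8 * S \<le> B + F" "0 < S"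
  shows "3 / 8 \<le> D"
proof -
  have "B + F \<le> B * (1 + F)"
    using assms(1,2) mult_right_mono[OF assms(2) assms(1)] by (simp add: algebra_simps)
  then have "3 / 8 * S \<le> D * S" using assms(3,4) by linarith
  then show ?thesis using assms(5) by simp
qed

text \<open>Otherwise the one-club holds at least two thirds of the peers.  If it is spread
out (its largest profile holds at most half of it), then \<open>F \<le> kM\<close> and \<open>3k\<^sup>3 < S\<close>
still make \<open>M\<close> large enough.\<close>

lemma rate_bound_one_club_spread:
  fixes F M S D k :: real
  assumes "0 < S" "16 / 81 * S^4 \<le> F^4" "0 \<le> F" "0 \<le> M" "2 * M \<le> F" "F \<le> k * M"
    and "3 * k^3 < S" "3 * M^3 * (1 + F - M) \<le> D * S^3"
  shows "3 / 8 * S^3 \<le> D * S^3"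
proof -
  have "3 / 2 * (M^3 * F) = 3 * M^3 * (F / 2)" by simp
  also have "\<dots> \<le> 3 * M^3 * (1 + F - M)"
    using assms(4,5) by (intro mult_left_mono) auto
  finally have DS: "3 / 2 * (M^3 * F) \<le> D * S^3" using assms(8) by linarith
  have "F^3 \<le> (k * M)^3" using assms(3,6) by (intro power_mono) auto
  then have "F^3 * F \<le> (k * M)^3 * F"
    using assms(3) by (rule mult_right_mono)
  also have "\<dots> = k^3 * (M^3 * F)" by (simp add: power_mult_distrib)
  also have "\<dots> \<le> S / 3 * (M^3 * F)"
    using assms(3,4,7) by (intro mult_right_mono) auto
  also have "\<dots> \<le> S / 3 * (2 / 3 * (D * S^3))"
    using DS assms(1) by (intro mult_left_mono) auto
  finally have "F^4 \<le> 2 / 9 * D * S^4"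
    by (simp add: power_Suc2[symmetric] power_Suc[symmetric] algebra_simps)
  then have "16 / 81 * S^4 \<le> 2 / 9 * D * S^4" using assms(2) by linarith
  then have "8 / 9 \<le> D" using assms(1) by simp
  then show ?thesis using assms(1) by (intro mult_right_mono) auto
qed

lemma rate_bound_one_club_heavy:
  fixes F M S D k :: real
  assumes "24 \<le> S" "2 / 3 * S \<le> F" "0 \<le> M" "M \<le> F" "F \<le> k * M" "3 * k^3 < S"
    and h: "3 * M^3 * (1 + F - M) \<le> D * S^3"
  shows "3 / 8 \<le> D"
proof -
  have S: "0 < S" and F: "0 \<le> F" using assms(1,2) by simp_all
  have "(2 / 3 * S)^4 \<le> F^4" using assms(2) S by (intro power_mono) auto
  moreover have "(2 / 3 * S)^4 = 16 / 81 * S^4" by (simp add: power_mult_distrib power_divide)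
  ultimately have F4: "16 / 81 * S^4 \<le> F^4" by simp
  consider "2 * M \<le> F" | "F < 2 * M" "4 * M \<le> 3 * F" | "3 * F < 4 * M" by linarith
  then have "3 / 8 * S^3 \<le> D * S^3"
  proof cases
    case 1
    show ?thesis
      using rate_bound_one_club_spread[OF S F4 F assms(3) 1 assms(5,6) h] .
  next
    case 2
    have "(F / 2)^3 \<le> M^3" using 2 F by (intro power_mono) auto
    then have "3 * (F / 2)^3 * (F / 4) \<le> 3 * M^3 * (1 + F - M)"
      using 2 F by (intro mult_mono) auto
    then have "3 / 32 * F^4 \<le> D * S^3" using h by (simp add: eval_nat_numeral)
    moreover have "24 * S^3 \<le> S^4"
      using mult_right_mono[OF assms(1), of "S^3"] S by (simp add: power_Suc[symmetric])
    ultimately show ?thesis using F4 zero_less_power[OF S, of 3] by linarith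
  next
    case 3
    have "(S / 2)^3 \<le> M^3" using 3 assms(2) S by (intro power_mono) auto
    then have "3 * (S / 2)^3 * 1 \<le> 3 * M^3 * (1 + F - M)"
      using assms(3,4) S by (intro mult_mono) auto
    moreover have "3 * (S / 2)^3 * 1 = 3 / 8 * S^3" by (simp add: power_divide)
    ultimately show ?thesis using h by linarith
  qed
  then show ?thesis by (rule mult_right_le_imp_le) (use S in simp)
qed

text \<open>The population bounds force a total download rate of at least 3/8 once
\<open>S > 3k\<^sup>3\<close>: either the empty peers, the middle peers or the one-club peers are
numerous enough to download fast.\<close>

lemma download_rate_bound:
  fixes A B F M S k D :: real
  assumes S: "S = 1 + A + B + F" and "0 \<le> A" "0 \<le> B" "0 \<le> M" "M \<le> F" "F \<le> k * M"
    and "2 \<le> k" "3 * k^3 < S" "B = 0 \<or> 1 \<le> B"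
    and h1: "3 * A^3 * (S - A) \<le> D * S^3"
    and h2: "B * (1 + F) \<le> D * S"
    and h3: "3 * M^3 * (1 + F - M) \<le> D * S^3"
  shows "3 / 8 \<le> D"
proof -
  have "8 \<le> k^3" using power_mono[OF \<open>2 \<le> k\<close>, of 3] by simp
  then have S24: "24 \<le> S" using \<open>3 * k^3 < S\<close> by linarith
  have F: "0 \<le> F" using \<open>0 \<le> M\<close> \<open>M \<le> F\<close> by linarith
  show ?thesis
  proof (cases "S\<^sup>2 \<le> 4 * A^3")
    case True
    have "0 < S" "1 \<le> S - A" using S24 S \<open>0 \<le> B\<close> F by linarith+
    then show ?thesis
      using rate_bound_empty_heavy[OF _ \<open>0 \<le> A\<close> _ True h1] by blast
  next
    case False
    then have "4 * A^3 < S\<^sup>2" by simp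
    moreover have "16 \<le> S" using S24 by simp
    ultimately have A: "4 * A < S"
      using few_empty \<open>0 \<le> A\<close> by blast
    show ?thesis
    proof (cases "B = 0")
      case True
      then have "2 / 3 * S \<le> F" using S A S24 by linarith
      then show ?thesis
        using rate_bound_one_club_heavy[OF S24 _ \<open>0 \<le> M\<close> \<open>M \<le> F\<close> \<open>F \<le> k * M\<close> \<open>3 * k^3 < S\<close> h3]
        by blast
    next
      case False
      then have "1 \<le> B" using \<open>B = 0 \<or> 1 \<le> B\<close> by blast
      moreover have "3 / 8 * S \<le> B + F" "0 < S" using S A S24 by linarith+
      ultimately show ?thesis
        using rate_bound_middle_heavy[OF F _ h2] by blast
    qed
  qed
qed

text \<open>Applying the arithmetic to the state, with \<open>M\<close> the population of a largest
one-club profile.\<close>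

lemma total_dl_rate_large:
  assumes "valid_state k x" "k \<ge> 2" "S_tot k x > 3 * k^3"
  shows "3 / 8 \<le> total_dl_rate k x"
proof -
  let ?M = "\<lambda>C. real (x C)" and ?F = "\<Sum>C\<in>one_club k. real (x C)"
  have "Max (x ` one_club k) \<in> x ` one_club k"
    using one_club_nonempty[OF assms(2)] by (intro Max_in) auto
  then obtain C0 where C0: "C0 \<in> one_club k" "x C0 = Max (x ` one_club k)"
    by auto
  have largest: "x C \<le> x C0" if "C \<in> one_club k" for C
    using that unfolding C0(2) by simp
  have "?F \<le> real (card (one_club k)) * ?M C0"
    using largest by (intro sum_bounded_above) auto
  also have "\<dots> \<le> real k * ?M C0"
    using card_one_club[OF assms(2)] by (simp add: mult_right_mono)
  finally have F: "?F \<le> real k * ?M C0" .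
  have "(\<Sum>C\<in>middle k. x C) = 0 \<or> 1 \<le> (\<Sum>C\<in>middle k. x C)" by linarith
  then have B: "(\<Sum>C\<in>middle k. ?M C) = 0 \<or> 1 \<le> (\<Sum>C\<in>middle k. ?M C)"
    by (metis (mono_tags) of_nat_0 of_nat_1 of_nat_mono of_nat_sum)
  have "real (3 * k^3) < real (S_tot k x)" using assms(3) by (simp only: of_nat_less_iff)
  then have S: "3 * real k ^ 3 < real (S_tot k x)" by simp
  have "?M C0 \<le> ?F" using C0(1) by (intro member_le_sum) auto
  moreover have "0 \<le> (\<Sum>C\<in>middle k. ?M C)" by (intro sum_nonneg) simp
  moreover have "2 \<le> real k" using assms(2) by simp
  ultimately show ?thesis
    using download_rate_bound[OF S_tot_split[OF assms(2)] of_nat_0_le_iff _ of_nat_0_le_iff _ F _ S B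
        total_dl_rate_empty[OF assms(1,2)] total_dl_rate_middle[OF assms(1,2)]
        total_dl_rate_one_club[OF assms(1,2) C0(1)]]
    by blast
qed

theorem mainTheorem6:
  fixes k :: nat and lam :: real
  assumes "k \<ge> 2" and "0 < lam" and "lam \<le> 1 / (3 * real k)"
  shows "\<exists>\<epsilon>>0. \<forall>x. valid_state k x \<and> S_tot k x > 3 * k ^ 3 \<longrightarrow>
           drift k lam (L1 k) x < - \<epsilon>"
proof (intro exI[of _ "1 / 48"] conjI allI impI)
  fix x assume "valid_state k x \<and> S_tot k x > 3 * k ^ 3"
  then have "3 / 8 \<le> total_dl_rate k x"
    using total_dl_rate_large assms(1) by blast
  moreover have "lam * real k \<le> 1 / (3 * real k) * real k"
    using assms(3) by (rule mult_right_mono) simp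
  moreover have "1 / (3 * real k) * real k = 1 / 3"
    using assms(1) by simp
  ultimately show "drift k lam (L1 k) x < - (1 / 48)"
    unfolding drift_L1 by linarith
qed simp

end
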